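(* In the multi-sender privacy game, let $\Psi'((\alpha^{(i)})_{i\in\mathbf{N}},\beta)=\xi'(\beta,(\alpha^{(i)})_{i\in\mathbf{N}})+\varrho\sum_{i\in\mathbf{N}}\zeta'_i(\alpha^{(i)})$. Any $((\alpha^{(i)*})_{i\in\mathbf{N}},\beta^* )\in\arg\min_{((\alpha^{(i)})_i,\beta)\in\prod_{i\in\mathbf{N}}A'_i\times B'}\Psi'((\alpha^{(i)})_i,\beta)$ is a Nash equilibrium, i.e. for every $j\in\mathbf{N}$ and $\bar\alpha^{(j)}\in A'_j$, $U_j((\alpha^{(i)*})_i,\beta^* )\le U_j(\bar\alpha^{(j)},(\alpha^{(i)*})_{i\neq j},\beta^* )$, and for every $\bar\beta\in B'$, $V((\alpha^{(i)*})_i,\beta^* )\le V((\alpha^{(i)*})_i,\bar\beta)$.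
   Context: Multi-sender privacy game. Let $n\ge 2$, $\mathbf{N}=\{1,\dots,n\}$, and let $\mathcal{X}$, $\mathcal{W}_i$, $\mathcal{Y}_i$ ($i\in\mathbf{N}$) be finite nonempty sets. $(X,(Z_i)_{i\in\mathbf{N}},(W_i)_{i\in\mathbf{N}})$ has joint probability mass function $p$ on $\mathcal{X}\times\mathcal{X}^n\times\prod_i\mathcal{W}_i$. Sender $i$ observes $(Z_i,W_i)$ and sends $Y_i\in\mathcal{Y}_i$ with $\mathbb{P}\{Y_i=y_i\mid Z_i=z_i,W_i=w_i\}=\alpha^{(i)}_{y_iz_iw_i}$, independently across senders given the observations, where $\alpha^{(i)}\in A'_i=\{\alpha^{(i)}:\alpha^{(i)}_{y_iz_iw_i}\in[0,1],\ \sum_{y_i}\alpha^{(i)}_{y_iz_iw_i}=1\ \forall(z_i,w_i)\in\mathcal{X}\times\mathcal{W}_i\}$. The receiver outputs $\hat X\in\mathcal{X}$ with $\mathbb{P}\{\hat X=\hat x\mid (Y_i)_i=(y_i)_i\}=\beta_{\hat x y_1\dots y_n}$, $\beta\in B'=\{\beta:\beta_{\hat x y_1\dots y_n}\in[0,1],\ \sum_{\hat x}\beta_{\hat x y_1\dots y_n}=1\ \forall (y_i)_i\}$. Let $d:\mathcal{X}\times\mathcal{X}\to\mathbb{R}_{\ge0}$ and $\varrho\in\mathbb{R}$. Define $\xi'(\beta,(\alpha^{(i)})_i)=\sum_{(y_1,z_1,w_1)}\cdots\sum_{(y_n,z_n,w_n)}\sum_{\hat x,x\in\mathcal{X}}d(x,\hat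 x)\beta_{\hat x y_1\dots y_n}\prod_{i\in\mathbf{N}}\alpha^{(i)}_{y_iz_iw_i}\,p(x,(z_i)_i,(w_i)_i)$, each $(y_i,z_i,w_i)$ ranging over $\mathcal{Y}_i\times\mathcal{X}\times\mathcal{W}_i$ (this is $\mathbb{E}\{d(X,\hat X)\}$). Define $\zeta'_j(\alpha^{(j)})=I(Y_j;W_j)=\sum_{y,w}P^j_{yw}\log\frac{P^j_{yw}}{P^j_yP^j_w}$ (with $0\log0=0$), where $P^j_w=\mathbb{P}\{W_j=w\}$, $P^j_{yw}=\sum_{z\in\mathcal{X}}\alpha^{(j)}_{yzw}\mathbb{P}\{Z_j=z,W_j=w\}$, $P^j_y=\sum_w P^j_{yw}$. Sender $j$'s cost: $U_j((\alpha^{(i)})_i,\beta)=\xi'(\beta,(\alpha^{(i)})_i)+\varrho\zeta'_j(\alpha^{(j)})$; receiver's cost: $V((\alpha^{(i)})_i,\beta)=\xi'(\beta,(\alpha^{(i)})_i)$. *)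

theory Defs
  imports Complex_Main "HOL-Library.FuncSet"
begin

text \<open>Senders are indexed by N = {1..n}. The alphabet of X (and of every Z_i) is the
 finite type 'x. The sets W i and Y i are finite nonempty subsets of the types 'w and 'y.
 A joint pmf p is given as a function p x zs ws with zs, ws ranging over
 PiE N (%_. UNIV) and PiE N W.\<close>

definition Nset :: "nat \<Rightarrow> nat set" where
  "Nset n = {1..n}"

definition Zs :: "nat \<Rightarrow> (nat \<Rightarrow> 'x::finite) set" where
  "Zs n = PiE (Nset n) (\<lambda>_. UNIV)"

definition is_pmf :: "nat \<Rightarrow> (nat \<Rightarrow> 'w set) \<Rightarrow> ('x::finite \<Rightarrow> (nat \<Rightarrow> 'x) \<Rightarrow> (nat \<Rightarrow> 'w) \<Rightarrow> real) \<Rightarrow> bool" where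
  "is_pmf n W p \<longleftrightarrow>
     (\<forall>x. \<forall>zs\<in>Zs n. \<forall>ws\<in>PiE (Nset n) W. p x zs ws \<ge> 0) \<and>
     (\<Sum>x\<in>UNIV. \<Sum>zs\<in>Zs n. \<Sum>ws\<in>PiE (Nset n) W. p x zs ws) = 1"

text \<open>A'_i: alpha i y z w = P{Y_i = y | Z_i = z, W_i = w}.\<close>
definition A_set :: "('y set) \<Rightarrow> ('w set) \<Rightarrow> ('y \<Rightarrow> 'x::finite \<Rightarrow> 'w \<Rightarrow> real) set" where
  "A_set Yi Wi = {a. (\<forall>y\<in>Yi. \<forall>z. \<forall>w\<in>Wi. 0 \<le> a y z w \<and> a y z w \<le> 1) \<and>
                     (\<forall>z. \<forall>w\<in>Wi. (\<Sum>y\<in>Yi. a y z w) = 1)}"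

text \<open>B': beta xh ys = P{Xhat = xh | (Y_i)_i = ys}.\<close>
definition B_set :: "nat \<Rightarrow> (nat \<Rightarrow> 'y set) \<Rightarrow> ('x::finite \<Rightarrow> (nat \<Rightarrow> 'y) \<Rightarrow> real) set" where
  "B_set n Y = {b. (\<forall>xh. \<forall>ys\<in>PiE (Nset n) Y. 0 \<le> b xh ys \<and> b xh ys \<le> 1) \<and>
                  (\<forall>ys\<in>PiE (Nset n) Y. (\<Sum>xh\<in>UNIV. b xh ys) = 1)}"

text \<open>xi' = E d(X, Xhat).\<close>
definition xi :: "nat \<Rightarrow> (nat \<Rightarrow> 'w set) \<Rightarrow> (nat \<Rightarrow> 'y set) \<Rightarrow>
    ('x::finite \<Rightarrow> (nat \<Rightarrow> 'x) \<Rightarrow> (nat \<Rightarrow> 'w) \<Rightarrow> real) \<Rightarrow> ('x \<Rightarrow> 'x \<Rightarrow> real) \<Rightarrow>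
    ('x \<Rightarrow> (nat \<Rightarrow> 'y) \<Rightarrow> real) \<Rightarrow> (nat \<Rightarrow> 'y \<Rightarrow> 'x \<Rightarrow> 'w \<Rightarrow> real) \<Rightarrow> real" where
  "xi n W Y p d b a =
     (\<Sum>ys\<in>PiE (Nset n) Y. \<Sum>zs\<in>Zs n. \<Sum>ws\<in>PiE (Nset n) W. \<Sum>xh\<in>UNIV. \<Sum>x\<in>UNIV.
        d x xh * b xh ys * (\<Prod>i\<in>Nset n. a i (ys i) (zs i) (ws i)) * p x zs ws)"

definition PZW :: "nat \<Rightarrow> (nat \<Rightarrow> 'w set) \<Rightarrow>
    ('x::finite \<Rightarrow> (nat \<Rightarrow> 'x) \<Rightarrow> (nat \<Rightarrow> 'w) \<Rightarrow> real) \<Rightarrow> nat \<Rightarrow> 'x \<Rightarrow> 'w \<Rightarrow> real" where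
  "PZW n W p j z w =
     (\<Sum>x\<in>UNIV. \<Sum>zs\<in>Zs n. \<Sum>ws\<in>PiE (Nset n) W.
        if zs j = z \<and> ws j = w then p x zs ws else 0)"

definition PW :: "nat \<Rightarrow> (nat \<Rightarrow> 'w set) \<Rightarrow>
    ('x::finite \<Rightarrow> (nat \<Rightarrow> 'x) \<Rightarrow> (nat \<Rightarrow> 'w) \<Rightarrow> real) \<Rightarrow> nat \<Rightarrow> 'w \<Rightarrow> real" where
  "PW n W p j w = (\<Sum>x\<in>UNIV. \<Sum>zs\<in>Zs n. \<Sum>ws\<in>PiE (Nset n) W.
        if ws j = w then p x zs ws else 0)"

definition PYW :: "nat \<Rightarrow> (nat \<Rightarrow> 'w set) \<Rightarrow>
    ('x::finite \<Rightarrow> (nat \<Rightarrow> 'x) \<Rightarrow> (nat \<Rightarrow> 'w) \<Rightarrow> real) \<Rightarrow> nat \<Rightarrow>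
    ('y \<Rightarrow> 'x \<Rightarrow> 'w \<Rightarrow> real) \<Rightarrow> 'y \<Rightarrow> 'w \<Rightarrow> real" where
  "PYW n W p j a y w = (\<Sum>z\<in>UNIV. a y z w * PZW n W p j z w)"

definition PY :: "nat \<Rightarrow> (nat \<Rightarrow> 'w set) \<Rightarrow>
    ('x::finite \<Rightarrow> (nat \<Rightarrow> 'x) \<Rightarrow> (nat \<Rightarrow> 'w) \<Rightarrow> real) \<Rightarrow> nat \<Rightarrow>
    ('y \<Rightarrow> 'x \<Rightarrow> 'w \<Rightarrow> real) \<Rightarrow> 'y \<Rightarrow> real" where
  "PY n W p j a y = (\<Sum>w\<in>W j. PYW n W p j a y w)"

text \<open>zeta'_j = I(Y_j; W_j), natural logarithm, with 0 log 0 = 0.\<close>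
definition zeta :: "nat \<Rightarrow> (nat \<Rightarrow> 'w set) \<Rightarrow> (nat \<Rightarrow> 'y set) \<Rightarrow>
    ('x::finite \<Rightarrow> (nat \<Rightarrow> 'x) \<Rightarrow> (nat \<Rightarrow> 'w) \<Rightarrow> real) \<Rightarrow> nat \<Rightarrow>
    ('y \<Rightarrow> 'x \<Rightarrow> 'w \<Rightarrow> real) \<Rightarrow> real" where
  "zeta n W Y p j a =
     (\<Sum>y\<in>Y j. \<Sum>w\<in>W j.
        if PYW n W p j a y w = 0 then 0
        else PYW n W p j a y w * ln (PYW n W p j a y w / (PY n W p j a y * PW n W p j w)))"

definition U :: "nat \<Rightarrow> (nat \<Rightarrow> 'w set) \<Rightarrow> (nat \<Rightarrow> 'y set) \<Rightarrow>
    ('x::finite \<Rightarrow> (nat \<Rightarrow> 'x) \<Rightarrow> (nat \<Rightarrow> 'w) \<Rightarrow> real) \<Rightarrow> ('x \<Rightarrow> 'x \<Rightarrow> real) \<Rightarrow> real \<Rightarrow>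
    nat \<Rightarrow> (nat \<Rightarrow> 'y \<Rightarrow> 'x \<Rightarrow> 'w \<Rightarrow> real) \<Rightarrow> ('x \<Rightarrow> (nat \<Rightarrow> 'y) \<Rightarrow> real) \<Rightarrow> real" where
  "U n W Y p d rho j a b = xi n W Y p d b a + rho * zeta n W Y p j (a j)"

definition V :: "nat \<Rightarrow> (nat \<Rightarrow> 'w set) \<Rightarrow> (nat \<Rightarrow> 'y set) \<Rightarrow>
    ('x::finite \<Rightarrow> (nat \<Rightarrow> 'x) \<Rightarrow> (nat \<Rightarrow> 'w) \<Rightarrow> real) \<Rightarrow> ('x \<Rightarrow> 'x \<Rightarrow> real) \<Rightarrow>
    (nat \<Rightarrow> 'y \<Rightarrow> 'x \<Rightarrow> 'w \<Rightarrow> real) \<Rightarrow> ('x \<Rightarrow> (nat \<Rightarrow> 'y) \<Rightarrow> real) \<Rightarrow> real" where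
  "V n W Y p d a b = xi n W Y p d b a"

definition Psi :: "nat \<Rightarrow> (nat \<Rightarrow> 'w set) \<Rightarrow> (nat \<Rightarrow> 'y set) \<Rightarrow>
    ('x::finite \<Rightarrow> (nat \<Rightarrow> 'x) \<Rightarrow> (nat \<Rightarrow> 'w) \<Rightarrow> real) \<Rightarrow> ('x \<Rightarrow> 'x \<Rightarrow> real) \<Rightarrow> real \<Rightarrow>
    (nat \<Rightarrow> 'y \<Rightarrow> 'x \<Rightarrow> 'w \<Rightarrow> real) \<Rightarrow> ('x \<Rightarrow> (nat \<Rightarrow> 'y) \<Rightarrow> real) \<Rightarrow> real" where
  "Psi n W Y p d rho a b = xi n W Y p d b a + rho * (\<Sum>i\<in>Nset n. zeta n W Y p i (a i))"

end

theory Submission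
  imports Defs
begin

text \<open>\<open>Psi\<close> is an exact potential of the game: it differs from sender \<open>j\<close>'s cost by
  \<open>rho\<close> times the leakage of the other senders, which does not depend on \<open>j\<close>'s own strategy,
  and from the receiver's cost by \<open>rho\<close> times the total leakage, which does not depend on \<open>beta\<close>.
  Hence a unilateral deviation changes a player's cost by exactly as much as it changes \<open>Psi\<close>,
  and a global minimiser of \<open>Psi\<close> admits no profitable deviation.\<close>

lemma Psi_eq_U_plus_others_leakage:
  assumes "j \<in> Nset n"
  shows "Psi n W Y p d rho a b =
           U n W Y p d rho j a b + rho * (\<Sum>i\<in>Nset n - {j}. zeta n W Y p i (a i))"
proof -
  have "(\<Sum>i\<in>Nset n. zeta n W Y p i (a i)) =
          zeta n W Y p j (a j) + (\<Sum>i\<in>Nset n - {j}. zeta n W Y p i (a i))"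
    using assms by (simp add: Nset_def sum.remove)
  then show ?thesis
    by (simp add: Psi_def U_def algebra_simps)
qed

lemma others_leakage_fun_upd:
  "(\<Sum>i\<in>Nset n - {j}. zeta n W Y p i ((a(j := a')) i)) =
     (\<Sum>i\<in>Nset n - {j}. zeta n W Y p i (a i))"
  by (rule sum.cong) auto

lemma Psi_eq_V_plus_leakage:
  "Psi n W Y p d rho a b = V n W Y p d a b + rho * (\<Sum>i\<in>Nset n. zeta n W Y p i (a i))"
  by (simp add: Psi_def V_def)

theorem mainTheorem8:
  fixes n :: nat
    and W :: "nat \<Rightarrow> 'w set" and Y :: "nat \<Rightarrow> 'y set"
    and p :: "'x::finite \<Rightarrow> (nat \<Rightarrow> 'x) \<Rightarrow> (nat \<Rightarrow> 'w) \<Rightarrow> real"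
    and d :: "'x \<Rightarrow> 'x \<Rightarrow> real" and rho :: real
    and astar :: "nat \<Rightarrow> 'y \<Rightarrow> 'x \<Rightarrow> 'w \<Rightarrow> real"
    and bstar :: "'x \<Rightarrow> (nat \<Rightarrow> 'y) \<Rightarrow> real"
  assumes "n \<ge> 2"
    and "\<forall>i\<in>Nset n. finite (W i) \<and> W i \<noteq> {}"
    and "\<forall>i\<in>Nset n. finite (Y i) \<and> Y i \<noteq> {}"
    and "is_pmf n W p"
    and "\<forall>x xh. d x xh \<ge> 0"
    and "\<forall>i\<in>Nset n. astar i \<in> A_set (Y i) (W i)"
    and "bstar \<in> B_set n Y"
    and "\<forall>a b. (\<forall>i\<in>Nset n. a i \<in> A_set (Y i) (W i)) \<longrightarrow> b \<in> B_set n Y \<longrightarrow>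
            Psi n W Y p d rho astar bstar \<le> Psi n W Y p d rho a b"
  shows "(\<forall>j\<in>Nset n. \<forall>abar\<in>A_set (Y j) (W j).
            U n W Y p d rho j astar bstar \<le> U n W Y p d rho j (astar(j := abar)) bstar) \<and>
         (\<forall>bbar\<in>B_set n Y. V n W Y p d astar bstar \<le> V n W Y p d astar bbar)"
proof (intro conjI ballI)
  fix j and abar :: "'y \<Rightarrow> 'x \<Rightarrow> 'w \<Rightarrow> real"
  assume j: "j \<in> Nset n" and "abar \<in> A_set (Y j) (W j)"
  then have "\<forall>i\<in>Nset n. (astar(j := abar)) i \<in> A_set (Y i) (W i)"
    using assms(6) by auto
  then have "Psi n W Y p d rho astar bstar \<le> Psi n W Y p d rho (astar(j := abar)) bstar"
    using assms(7,8) by blast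
  then show "U n W Y p d rho j astar bstar \<le> U n W Y p d rho j (astar(j := abar)) bstar"
    unfolding Psi_eq_U_plus_others_leakage[OF j] others_leakage_fun_upd by simp
next
  fix bbar :: "'x \<Rightarrow> (nat \<Rightarrow> 'y) \<Rightarrow> real"
  assume "bbar \<in> B_set n Y"
  then have "Psi n W Y p d rho astar bstar \<le> Psi n W Y p d rho astar bbar"
    using assms(6,8) by blast
  then show "V n W Y p d astar bstar \<le> V n W Y p d astar bbar"
    unfolding Psi_eq_V_plus_leakage by simp
qed

end
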